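(* Let $H$ be a $\{P,C\}$-free 3-graph on vertex set $V$, let $e_1,e_2\in H$ with $e_1\cap e_2=\{x\}$, set $U=e_1\cup e_2$, $W=V\setminus U$, and assume $H[W]$ has at least one edge. Let $W_0$ be the set of vertices of degree $0$ in $H[W]$, $W_1=W\setminus W_0$ (so $|W_1|\ge 3$), and let $H_1$ be the set of edges $h\in H$ with $h\cap U\ne\emptyset$, $h\cap W\neq\emptyset$ and $h\cap W\subseteq W_1$. Then $|H_1|\le 2|W_1|-3$, and if moreover $|W_1|\ge 4$ then $|H[U]|+|H_1|\le 2|W_1|+2$.
   Context: All hypergraphs are 3-uniform; edge sets are identified with the 3-graphs; $H[S]$ is the sub-3-graph induced on $S$. $P$ is the loose 3-uniform path of length 3: vertices $a,b,c,d,e,f,g$, edges $\{a,b,c\},\{c,d,e\},\{e,f,g\}$. $C$ is the loose triangle: vertices $x_1,x_2,x_3,y_1,y_2,y_3$, edges $\{x_1,y_3,x_2\},\{x_2,y_1,x_3\},\{x_3,y_2,x_1\}$. $\{P,C\}$-free means containing no copy of $P$ and no copy of $C$. *)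

theory Defs
  imports Main
begin

definition three_graph :: "'a set \<Rightarrow> 'a set set \<Rightarrow> bool" where
  "three_graph V H \<longleftrightarrow> finite V \<and> (\<forall>e\<in>H. e \<subseteq> V \<and> card e = 3)"

definition contains_P :: "'a set set \<Rightarrow> bool" where
  "contains_P H \<longleftrightarrow> (\<exists>a b c d e f g. distinct [a, b, c, d, e, f, g] \<and>
      {a, b, c} \<in> H \<and> {c, d, e} \<in> H \<and> {e, f, g} \<in> H)"

definition contains_C :: "'a set set \<Rightarrow> bool" where
  "contains_C H \<longleftrightarrow> (\<exists>x1 x2 x3 y1 y2 y3. distinct [x1, x2, x3, y1, y2, y3] \<and>
      {x1, y3, x2} \<in> H \<and> {x2, y1, x3} \<in> H \<and> {x3, y2, x1} \<in> H)"

definition PC_free :: "'a set set \<Rightarrow> bool" where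
  "PC_free H \<longleftrightarrow> \<not> contains_P H \<and> \<not> contains_C H"

definition induced :: "'a set set \<Rightarrow> 'a set \<Rightarrow> 'a set set" where
  "induced H S = {h \<in> H. h \<subseteq> S}"

definition degree :: "'a set set \<Rightarrow> 'a \<Rightarrow> nat" where
  "degree H v = card {h \<in> H. v \<in> h}"

end

theory Submission
  imports Defs
begin

text \<open>
  Write e1 = {x, a1, a2} and e2 = {x, b1, b2}. Excluding the loose path alone already forces every
  edge of H1 to be either a pendant edge {a1, a2, w} or {b1, b2, w} with w in W1, or an edge
  {x} \<union> l with l a pair in W1. The pairs l form the link graph of x, whose vertices are never
  pendant, and all link neighbours of a vertex w lie in one edge of H[W] through w, so the link
  has maximum degree 2. Counting vertices of W1 gives |H1| \<le> |W1|, unless some w is pendant for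
  both e1 and e2; then the two other vertices of an H[W]-edge through w have link degree at most 1,
  which still leaves |H1| \<le> 2|W1| - 3. For the second bound, a pendant edge leaves at most 4 and
  a link edge at most 6 of the 10 triples of U available to H[U].
\<close>

lemma card_le_choose_if_supersets:
  assumes S: "finite S" and A: "A \<subseteq> S" "card A \<le> k"
    and T: "T \<subseteq> {t. A \<subseteq> t \<and> t \<subseteq> S \<and> card t = k}"
  shows "card T \<le> (card S - card A) choose (k - card A)"
proof -
  let ?T = "{t. A \<subseteq> t \<and> t \<subseteq> S \<and> card t = k}"
    and ?R = "{r. r \<subseteq> S - A \<and> card r = k - card A}"
  have fA: "finite A" using S A(1) by (rule finite_subset[rotated])
  have bij: "bij_betw (\<lambda>t. t - A) ?T ?R"
  proof (rule bij_betw_byWitness[where f' = "\<lambda>r. r \<union> A"])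
    have "card (r \<union> A) = k" if "r \<subseteq> S - A" "card r = k - card A" for r
      using that A(2) fA finite_subset[OF _ S] by (subst card_Un_disjoint) auto
    then show "(\<lambda>r. r \<union> A) ` ?R \<subseteq> ?T" using A(1) by auto
  qed (use S fA in \<open>auto simp: card_Diff_subset\<close>)
  have "card T \<le> card ?T"
    using T S by (intro card_mono) (auto intro: finite_subset[of _ "Pow S"])
  also have "\<dots> = card ?R" using bij by (rule bij_betw_same_card)
  also have "\<dots> = (card S - card A) choose (k - card A)"
    using S A fA by (simp add: n_subsets card_Diff_subset)
  finally show ?thesis .
qed

lemma double_card_le_if_degree_le_2:
  fixes E :: "'a set set"
  assumes fin: "finite (\<Union>E)" and two: "\<And>e. e \<in> E \<Longrightarrow> card e = 2"
    and deg2: "\<And>v. card {e \<in> E. v \<in> e} \<le> 2"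
    and deg1: "\<And>v. v \<in> Y \<Longrightarrow> card {e \<in> E. v \<in> e} \<le> 1"
  shows "2 * card E + card (\<Union>E \<inter> Y) \<le> 2 * card (\<Union>E)"
proof -
  let ?D = "\<Union>E" and ?deg = "\<lambda>v. card {e \<in> E. v \<in> e}"
  have "finite E" using fin by (simp add: finite_UnionD)
  moreover have "card {v \<in> ?D. v \<in> e} = 2" if "e \<in> E" for e
  proof -
    have "{v \<in> ?D. v \<in> e} = e" using that by blast
    then show ?thesis using two[OF that] by simp
  qed
  ultimately have "2 * card E = sum ?deg ?D"
    using fin by (intro sum_multicount[symmetric]) auto
  also have "\<dots> = sum ?deg (?D \<inter> Y) + sum ?deg (?D - Y)"
    using fin by (rule sum.Int_Diff)
  also have "\<dots> \<le> card (?D \<inter> Y) + 2 * card (?D - Y)"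
    using sum_bounded_above[of "?D \<inter> Y" ?deg 1] sum_bounded_above[of "?D - Y" ?deg 2] deg1 deg2
    by (intro add_mono) auto
  finally show ?thesis
    using card_Int_Diff[OF fin, of Y] by linarith
qed

lemma degree_eq_0_iff:
  assumes "finite G"
  shows "degree G v = 0 \<longleftrightarrow> v \<notin> \<Union>G"
  using assms by (auto simp: degree_def)

lemma contains_P_if_loose_path:
  assumes "A \<in> H" "B \<in> H" "C \<in> H" "card A = 3" "card B = 3" "card C = 3"
    and AB: "A \<inter> B = {c}" and BC: "B \<inter> C = {e}" and AC: "A \<inter> C = {}"
  shows "contains_P H"
proof -
  have fin: "finite A" "finite B" "finite C" using assms(4-6) card.infinite by fastforce+
  have ce: "c \<in> A" "c \<in> B" "e \<in> B" "e \<in> C" "c \<noteq> e" using AB BC AC by blast+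
  then have "card (A - {c}) = 2" "card (B - {c, e}) = 1" "card (C - {e}) = 2"
    using assms(4-6) fin by (simp_all add: card_Diff_subset)
  then obtain a b d f g where A: "A - {c} = {a, b}" "a \<noteq> b" and B: "B - {c, e} = {d}"
    and C: "C - {e} = {f, g}" "f \<noteq> g"
    by (auto simp: card_2_iff card_1_singleton_iff)
  have "A = {a, b, c}" "B = {c, d, e}" "C = {e, f, g}" using A(1) B C(1) ce by blast+
  moreover have "distinct [a, b, c, d, e, f, g]"
  proof -
    have "a \<notin> B" "b \<notin> B" "a \<notin> C" "b \<notin> C" "a \<noteq> c" "b \<noteq> c"
      using A(1) AB AC by blast+
    moreover have "d \<notin> A" "d \<notin> C" "d \<noteq> c" "d \<noteq> e" using B AB BC by blast+
    moreover have "f \<noteq> e" "g \<noteq> e" "f \<notin> A" "g \<notin> A" "f \<notin> B" "g \<notin> B"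
      using C(1) BC AC by blast+
    ultimately show ?thesis
      using A(2) C(2) ce \<open>A = {a, b, c}\<close> \<open>B = {c, d, e}\<close> \<open>C = {e, f, g}\<close> by auto
  qed
  ultimately show ?thesis
    unfolding contains_P_def using assms(1-3) by blast
qed

locale P_free_3graph =
  fixes V :: "'a set" and H :: "'a set set"
  assumes three_graph: "three_graph V H" and P_free: "\<not> contains_P H"
begin

lemma finite_V: "finite V"
  and edge_subset: "h \<in> H \<Longrightarrow> h \<subseteq> V"
  and card_edge: "h \<in> H \<Longrightarrow> card h = 3"
  using three_graph by (auto simp: three_graph_def)

lemma finite_edge: "h \<in> H \<Longrightarrow> finite h"
  using card_edge card.infinite by fastforce

lemma finite_H: "finite H"
  using finite_V edge_subset by (blast intro: finite_subset[of _ "Pow V"])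

lemma no_loose_path:
  assumes "A \<in> H" "B \<in> H" "C \<in> H" "A \<inter> B = {c}" "B \<inter> C = {e}" "A \<inter> C = {}"
  shows False
  using contains_P_if_loose_path[OF assms(1-3) card_edge[OF assms(1)] card_edge[OF assms(2)]
      card_edge[OF assms(3)] assms(4-6)] P_free by blast

lemma rest_subset_or_disjoint:
  assumes g: "g \<in> H" and p: "p \<in> H" and t: "t \<in> H" and gp: "g \<inter> p = {v}" and gt: "g \<inter> t = {}"
  shows "p - {v} \<subseteq> t \<or> p \<inter> t = {}"
proof (rule ccontr)
  assume contra: "\<not> ?thesis"
  have "v \<in> p" using gp by blast
  then have "card (p - {v}) = 2" using card_edge[OF p] finite_edge[OF p] by simp
  then obtain a b where ab: "p - {v} = {a, b}" by (auto simp: card_2_iff)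
  have "v \<notin> t" using gp gt by blast
  then have "p \<inter> t = {a, b} \<inter> t" using ab by blast
  then have "p \<inter> t = {a} \<or> p \<inter> t = {b}" using contra ab by (cases "a \<in> t") auto
  then show False using no_loose_path[OF g p t gp _ gt] by blast
qed

lemma card_induced_le_choose_3:
  assumes "finite S"
  shows "card (induced H S) \<le> card S choose 3"
  using card_le_choose_if_supersets[OF assms, of "{}" 3 "induced H S"] card_edge
  by (auto simp: induced_def)

lemma card_Un_crossing_edges:
  assumes "e1 \<in> H" "e2 \<in> H" "e1 \<inter> e2 = {x}"
  shows "card (e1 \<union> e2) = 5"
  using card_Un_Int[OF finite_edge[OF assms(1)] finite_edge[OF assms(2)]]
    card_edge[OF assms(1)] card_edge[OF assms(2)] assms(3) by simp

lemma centre_if_Int_Un_singleton: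
  assumes e1: "e1 \<in> H" and e2: "e2 \<in> H" and x: "e1 \<inter> e2 = {x}"
    and h: "h \<in> H" and hu: "h \<inter> (e1 \<union> e2) = {u}"
  shows "u = x"
proof (rule ccontr)
  assume "u \<noteq> x"
  then have "u \<in> e1 - e2 \<or> u \<in> e2 - e1" using x hu by auto
  then show False
  proof
    assume "u \<in> e1 - e2"
    then have "h \<inter> e1 = {u}" "h \<inter> e2 = {}" using hu by auto
    then show False using no_loose_path[OF h e1 e2 _ x] by simp
  next
    assume "u \<in> e2 - e1"
    then have "h \<inter> e2 = {u}" "h \<inter> e1 = {}" using hu by auto
    moreover have "e2 \<inter> e1 = {x}" using x by blast
    ultimately show False using no_loose_path[OF h e2 e1] by blast
  qed
qed

lemma Int_Un_eq_rest_if_card_2: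
  assumes e1: "e1 \<in> H" and e2: "e2 \<in> H" and x: "e1 \<inter> e2 = {x}"
    and h: "h \<in> H" and f: "f \<in> H" and fU: "f \<inter> (e1 \<union> e2) = {}" and fh: "f \<inter> h = {w}"
    and two: "card (h \<inter> (e1 \<union> e2)) = 2"
  shows "h \<inter> (e1 \<union> e2) = e1 - {x} \<or> h \<inter> (e1 \<union> e2) = e2 - {x}"
proof -
  let ?I = "h \<inter> (e1 \<union> e2)"
  have "w \<in> h" "w \<notin> e1 \<union> e2" using fh fU by blast+
  then have "card (insert w ?I) = 3" using two finite_edge[OF h] by simp
  then have "insert w ?I = h" using card_edge[OF h] finite_edge[OF h] \<open>w \<in> h\<close>
    by (intro card_subset_eq) auto
  then have rest: "h - {w} = ?I" using \<open>w \<notin> e1 \<union> e2\<close> by blast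
  have "\<not> ?I \<subseteq> {x}"
  proof
    assume "?I \<subseteq> {x}"
    then have "card ?I \<le> 1" using card_mono[of "{x}" ?I] by simp
    then show False using two by simp
  qed
  have "x \<in> e1" "x \<in> e2" using x by blast+
  then have card_rest: "card (e1 - {x}) = 2" "card (e2 - {x}) = 2"
    using card_edge[OF e1] card_edge[OF e2] finite_edge[OF e1] finite_edge[OF e2] by simp_all
  have "f \<inter> e1 = {}" "f \<inter> e2 = {}" using fU by blast+
  then have "?I \<subseteq> e1 \<or> h \<inter> e1 = {}" "?I \<subseteq> e2 \<or> h \<inter> e2 = {}"
    using rest_subset_or_disjoint[OF f h e1 fh] rest_subset_or_disjoint[OF f h e2 fh] rest by simp_all
  moreover have "\<not> (?I \<subseteq> e1 \<and> ?I \<subseteq> e2)" "\<not> (h \<inter> e1 = {} \<and> h \<inter> e2 = {})"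
    using \<open>\<not> ?I \<subseteq> {x}\<close> x by blast+
  ultimately consider "?I \<subseteq> e1" "h \<inter> e2 = {}" | "?I \<subseteq> e2" "h \<inter> e1 = {}" by blast
  then show ?thesis
  proof cases
    case 1
    then have "?I \<subseteq> e1 - {x}" using \<open>x \<in> e2\<close> by blast
    then have "?I = e1 - {x}" using card_subset_eq[OF finite_Diff[OF finite_edge[OF e1]]] card_rest two by simp
    then show ?thesis by simp
  next
    case 2
    then have "?I \<subseteq> e2 - {x}" using \<open>x \<in> e1\<close> by blast
    then have "?I = e2 - {x}" using card_subset_eq[OF finite_Diff[OF finite_edge[OF e2]]] card_rest two by simp
    then show ?thesis by simp
  qed
qed

lemma card_induced_le_4_if_pendant:
  assumes e1: "e1 \<in> H" and e2: "e2 \<in> H" and x: "e1 \<inter> e2 = {x}"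
    and p: "insert w (e1 - {x}) \<in> H" and f: "f \<in> H" and "w \<in> f" and fU: "f \<inter> (e1 \<union> e2) = {}"
  shows "card (induced H (e1 \<union> e2)) \<le> 4"
proof -
  let ?U = "e1 \<union> e2" and ?p = "insert w (e1 - {x})"
  have "w \<notin> ?U" using \<open>w \<in> f\<close> fU by blast
  then have rest: "?p - {w} = e1 - {x}" by blast
  have fp: "f \<inter> ?p = {w}" using \<open>w \<in> f\<close> fU by blast
  have "x \<in> e1" using x by blast
  then have card_rest: "card (e1 - {x}) = 2" using card_edge[OF e1] finite_edge[OF e1] by simp
  have "e1 - {x} \<subseteq> t" if t: "t \<in> induced H ?U - {e2}" for t
  proof -
    have tH: "t \<in> H" "t \<subseteq> ?U" "t \<noteq> e2" using t by (auto simp: induced_def)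
    have "f \<inter> t = {}" using fU tH by blast
    from rest_subset_or_disjoint[OF f p tH(1) fp this]
    have "e1 - {x} \<subseteq> t \<or> t \<inter> (e1 - {x}) = {}" using rest by blast
    moreover have "\<not> t \<subseteq> e2"
    proof
      assume "t \<subseteq> e2"
      then show False
        using card_subset_eq[OF finite_edge[OF e2]] card_edge[OF tH(1)] card_edge[OF e2] tH(3) by simp
    qed
    ultimately show ?thesis using tH(2) x by blast
  qed
  then have "card (induced H ?U - {e2}) \<le> (card ?U - card (e1 - {x})) choose (3 - card (e1 - {x}))"
    using finite_edge[OF e1] finite_edge[OF e2] card_rest card_edge
    by (intro card_le_choose_if_supersets) (auto simp: induced_def)
  moreover have "finite (induced H ?U)" using finite_H by (simp add: induced_def)
  ultimately show ?thesis
    using card_Un_crossing_edges[OF e1 e2 x] card_rest card_Diff_singleton_if[of "induced H ?U" e2]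
    by (auto split: if_splits)
qed

lemma card_induced_le_6_if_centre_edge:
  assumes e1: "e1 \<in> H" and e2: "e2 \<in> H" and x: "e1 \<inter> e2 = {x}"
    and h: "h \<in> H" and hU: "h \<inter> (e1 \<union> e2) = {x}"
  shows "card (induced H (e1 \<union> e2)) \<le> 6"
proof -
  let ?U = "e1 \<union> e2"
  \<comment> \<open>An edge inside U avoiding x would meet both e1 - {x} and e2 - {x} in 0 or 2 vertices.\<close>
  have "x \<in> t" if t: "t \<in> induced H ?U" for t
  proof (rule ccontr)
    assume "x \<notin> t"
    have tH: "t \<in> H" "t \<subseteq> ?U" using t by (auto simp: induced_def)
    have ht: "h \<inter> t = {}" using hU tH \<open>x \<notin> t\<close> by auto
    have meets_rest: "card (t \<inter> (e - {x})) \<in> {0, 2}" if e: "e \<in> H" and he: "h \<inter> e = {x}" for e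
    proof -
      have "x \<in> e" using he by blast
      then have "card (e - {x}) = 2" using card_edge[OF e] finite_edge[OF e] by simp
      from rest_subset_or_disjoint[OF h e tH(1) he ht] show ?thesis
      proof
        assume "e - {x} \<subseteq> t"
        then show ?thesis using \<open>card (e - {x}) = 2\<close> by (simp add: Int_absorb1)
      next
        assume "e \<inter> t = {}"
        then have "t \<inter> (e - {x}) = {}" by blast
        then show ?thesis by simp
      qed
    qed
    have "h \<inter> e1 = {x}" "h \<inter> e2 = {x}" using hU x by blast+
    then have c1: "card (t \<inter> (e1 - {x})) \<in> {0, 2}" and c2: "card (t \<inter> (e2 - {x})) \<in> {0, 2}"
      using meets_rest e1 e2 by simp_all
    have "t \<inter> (e1 - {x}) \<union> t \<inter> (e2 - {x}) = t" using tH \<open>x \<notin> t\<close> by blast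
    moreover have "card (t \<inter> (e1 - {x}) \<union> t \<inter> (e2 - {x}))
        = card (t \<inter> (e1 - {x})) + card (t \<inter> (e2 - {x}))"
      using finite_edge[OF tH(1)] x by (intro card_Un_disjoint) blast+
    ultimately have "card t = card (t \<inter> (e1 - {x})) + card (t \<inter> (e2 - {x}))" by simp
    then show False using c1 c2 card_edge[OF tH(1)] by auto
  qed
  then have "card (induced H ?U) \<le> (card ?U - card {x}) choose (3 - card {x})"
    using finite_edge[OF e1] finite_edge[OF e2] card_edge x
    by (intro card_le_choose_if_supersets) (auto simp: induced_def)
  then show ?thesis using card_Un_crossing_edges[OF e1 e2 x] by (simp add: numeral_eq_Suc)
qed

end

locale P_free_two_edges = P_free_3graph +
  fixes e1 e2 :: "'a set" and x :: 'a
  assumes e1: "e1 \<in> H" and e2: "e2 \<in> H" and e1_Int_e2: "e1 \<inter> e2 = {x}"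
begin

definition U :: "'a set" where "U = e1 \<union> e2"

definition W :: "'a set" where "W = V - U"

definition W1 :: "'a set" where "W1 = \<Union>(induced H W)"

definition H1 :: "'a set set" where
  "H1 = {h \<in> H. h \<inter> U \<noteq> {} \<and> h \<inter> W \<noteq> {} \<and> h \<inter> W \<subseteq> W1}"

definition pendant_vertices :: "'a set \<Rightarrow> 'a set" where
  "pendant_vertices e = {w \<in> W1. insert w (e - {x}) \<in> H}"

definition link :: "'a set set" where
  "link = {l. l \<subseteq> W1 \<and> card l = 2 \<and> insert x l \<in> H}"

lemma W_Int_U: "W \<inter> U = {}"
  by (auto simp: W_def)

lemma x_in_U: "x \<in> U"
  using e1_Int_e2 by (auto simp: U_def)

lemma mem_W1_iff: "w \<in> W1 \<longleftrightarrow> (\<exists>f\<in>H. f \<subseteq> W \<and> w \<in> f)"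
  by (auto simp: W1_def induced_def)

lemma W1_subset_W: "W1 \<subseteq> W"
  by (auto simp: mem_W1_iff)

lemma finite_W1: "finite W1"
proof -
  have "W1 \<subseteq> V" using W1_subset_W by (auto simp: W_def)
  then show ?thesis using finite_V by (rule finite_subset)
qed

lemma card_W1_ge_3:
  assumes "induced H W \<noteq> {}"
  shows "3 \<le> card W1"
proof -
  obtain f where f: "f \<in> H" "f \<subseteq> W" using assms by (auto simp: induced_def)
  then have "f \<subseteq> W1" using mem_W1_iff by blast
  then have "card f \<le> card W1" by (rule card_mono[OF finite_W1])
  then show ?thesis using card_edge[OF f(1)] by simp
qed

lemma pendant_vertices_subset_W1: "pendant_vertices e \<subseteq> W1"
  by (auto simp: pendant_vertices_def)

lemma finite_pendant_vertices: "finite (pendant_vertices e)"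
  using pendant_vertices_subset_W1 finite_W1 by (rule finite_subset)

lemma link_subset_W1: "l \<in> link \<Longrightarrow> l \<subseteq> W1"
  and card_link_edge: "l \<in> link \<Longrightarrow> card l = 2"
  and centre_edge: "l \<in> link \<Longrightarrow> insert x l \<in> H"
  by (auto simp: link_def)

lemma Union_link_subset_W1: "\<Union>link \<subseteq> W1"
  using link_subset_W1 by blast

lemma finite_Union_link: "finite (\<Union>link)"
  using Union_link_subset_W1 finite_W1 by (rule finite_subset)

lemma finite_link: "finite link"
proof -
  have "link \<subseteq> Pow W1" using link_subset_W1 by blast
  then show ?thesis using finite_W1 by (simp add: finite_subset)
qed

lemma other_edge:
  assumes "e \<in> {e1, e2}"
  obtains e' where "e \<in> H" "e' \<in> H" "e \<inter> e' = {x}" "U = e \<union> e'"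
  using assms e1 e2 e1_Int_e2 by (auto simp: U_def)

lemma H1_cases:
  assumes "h \<in> H1"
  obtains (pendant) e w where "e \<in> {e1, e2}" "w \<in> pendant_vertices e" "h = insert w (e - {x})"
    | (centre) l where "l \<in> link" "h = insert x l"
proof -
  have h: "h \<in> H" and hU: "h \<inter> U \<noteq> {}" and hW: "h \<inter> W \<noteq> {}" and hW1: "h \<inter> W \<subseteq> W1"
    using assms by (auto simp: H1_def)
  let ?I = "h \<inter> U" and ?J = "h \<inter> W"
  have hIJ: "h = ?I \<union> ?J" using edge_subset[OF h] by (auto simp: W_def)
  have "card ?I + card ?J = 3"
    using card_Un_disjoint[of ?I ?J] finite_edge[OF h] W_Int_U hIJ card_edge[OF h] by auto
  moreover have "card ?I \<noteq> 0" "card ?J \<noteq> 0" using finite_edge[OF h] hU hW by auto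
  ultimately consider "card ?I = 1" "card ?J = 2" | "card ?I = 2" "card ?J = 1" by linarith
  then show thesis
  proof cases
    case 1
    then obtain u where "?I = {u}" by (auto simp: card_1_singleton_iff)
    then have "u = x" using centre_if_Int_Un_singleton[OF e1 e2 e1_Int_e2 h] by (simp add: U_def)
    then have "h = insert x ?J" using hIJ \<open>?I = {u}\<close> by auto
    moreover have "?J \<in> link" using 1 hW1 h calculation by (auto simp: link_def)
    ultimately show thesis by (rule centre[rotated])
  next
    case 2
    then obtain w where J: "?J = {w}" by (auto simp: card_1_singleton_iff)
    then have "w \<in> W1" using hW1 by blast
    then obtain f where f: "f \<in> H" "f \<subseteq> W" "w \<in> f" by (auto simp: mem_W1_iff)
    have "f \<inter> h = f \<inter> ?J" using f(2) by blast
    then have "f \<inter> h = {w}" using J f(3) by simp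
    moreover have "f \<inter> U = {}" using f(2) W_Int_U by blast
    ultimately have "?I = e1 - {x} \<or> ?I = e2 - {x}"
      using Int_Un_eq_rest_if_card_2[OF e1 e2 e1_Int_e2 h f(1)] 2 by (simp add: U_def)
    then obtain e where "e \<in> {e1, e2}" "?I = e - {x}" by blast
    moreover have "h = insert w ?I" using hIJ J by auto
    ultimately show thesis using pendant h \<open>w \<in> W1\<close> by (auto simp: pendant_vertices_def)
  qed
qed

lemma link_edge_subset_W_edge:
  assumes l: "l \<in> link" and f: "f \<in> H" "f \<subseteq> W" and lf: "l \<inter> f \<noteq> {}"
  shows "l \<subseteq> f"
proof -
  have "l \<subseteq> W" using link_subset_W1[OF l] W1_subset_W by blast
  then have "e1 \<inter> l = {}" "x \<notin> l" using W_Int_U x_in_U by (auto simp: U_def)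
  moreover have "x \<in> e1" using e1_Int_e2 by blast
  ultimately have "e1 \<inter> insert x l = {x}" by simp
  moreover have "e1 \<inter> f = {}" using f(2) W_Int_U by (auto simp: U_def)
  ultimately have "insert x l - {x} \<subseteq> f \<or> insert x l \<inter> f = {}"
    by (rule rest_subset_or_disjoint[OF e1 centre_edge[OF l] f(1)])
  then show ?thesis using lf \<open>x \<notin> l\<close> by auto
qed

lemma pendant_notin_link:
  assumes "e \<in> {e1, e2}" "w \<in> pendant_vertices e"
  shows "w \<notin> \<Union>link"
proof
  assume "w \<in> \<Union>link"
  then obtain l where l: "l \<in> link" "w \<in> l" by blast
  obtain e' where e': "e' \<in> H" "e \<inter> e' = {x}" "U = e \<union> e'"
    using other_edge[OF assms(1)] .
  have p: "insert w (e - {x}) \<in> H" and "w \<in> W"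
    using assms(2) W1_subset_W by (auto simp: pendant_vertices_def)
  have "l \<subseteq> W" using link_subset_W1[OF l(1)] W1_subset_W by blast
  then have lU: "l \<inter> U = {}" and "w \<notin> U" using \<open>w \<in> W\<close> W_Int_U by blast+
  have "x \<in> e'" "x \<noteq> w" using e' \<open>w \<notin> U\<close> by auto
  have "e' \<inter> insert x l = {x}" using lU \<open>x \<in> e'\<close> e'(3) by auto
  moreover have "insert x l \<inter> insert w (e - {x}) = {w}" using lU l(2) \<open>x \<noteq> w\<close> e'(3) by auto
  moreover have "e' \<inter> insert w (e - {x}) = {}" using e'(2,3) \<open>w \<notin> U\<close> by auto
  ultimately show False by (rule no_loose_path[OF e'(1) centre_edge[OF l(1)] p])
qed

lemma pendant_vertices_in_common_W_edge:
  assumes w: "w \<in> pendant_vertices e1" and y: "y \<in> pendant_vertices e2"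
    and f: "f \<in> H" "f \<subseteq> W" "w \<in> f" "y \<in> f"
  shows "w = y"
proof (rule ccontr)
  assume "w \<noteq> y"
  have p: "insert w (e1 - {x}) \<in> H" "insert y (e2 - {x}) \<in> H" and "w \<in> W" "y \<in> W"
    using w y W1_subset_W by (auto simp: pendant_vertices_def)
  then have "w \<notin> U" "y \<notin> U" "f \<inter> U = {}" using f(2) W_Int_U by blast+
  then have "w \<notin> e1 \<union> e2" "y \<notin> e1 \<union> e2" "f \<inter> (e1 \<union> e2) = {}" by (simp_all add: U_def)
  have "insert w (e1 - {x}) \<inter> f = {w}" using \<open>f \<inter> (e1 \<union> e2) = {}\<close> f(3) by auto
  moreover have "f \<inter> insert y (e2 - {x}) = {y}" using \<open>f \<inter> (e1 \<union> e2) = {}\<close> f(4) by auto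
  moreover have "insert w (e1 - {x}) \<inter> insert y (e2 - {x}) = {}"
    using \<open>w \<noteq> y\<close> \<open>w \<notin> e1 \<union> e2\<close> \<open>y \<notin> e1 \<union> e2\<close> e1_Int_e2 by auto
  ultimately show False by (rule no_loose_path[OF p(1) f(1) p(2)])
qed

lemma link_degree_le_2: "card {l \<in> link. w \<in> l} \<le> 2"
proof (cases "w \<in> W1")
  case False
  then have "{l \<in> link. w \<in> l} = {}" using link_subset_W1 by blast
  then show ?thesis by (simp only: card.empty)
next
  case True
  then obtain f where f: "f \<in> H" "f \<subseteq> W" "w \<in> f" by (auto simp: mem_W1_iff)
  have "{l \<in> link. w \<in> l} \<subseteq> {l. {w} \<subseteq> l \<and> l \<subseteq> f \<and> card l = 2}"
    using link_edge_subset_W_edge[OF _ f(1,2)] f(3) card_link_edge by blast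
  then have "card {l \<in> link. w \<in> l} \<le> (card f - card {w}) choose (2 - card {w})"
    using f(3) by (intro card_le_choose_if_supersets[OF finite_edge[OF f(1)]]) auto
  then show ?thesis using card_edge[OF f(1)] by simp
qed

lemma link_degree_le_1:
  assumes "e \<in> {e1, e2}" "w \<in> pendant_vertices e"
    and f: "f \<in> H" "f \<subseteq> W" "w \<in> f" and y: "y \<in> f - {w}"
  shows "card {l \<in> link. y \<in> l} \<le> 1"
proof -
  have "{l \<in> link. y \<in> l} \<subseteq> {l. {y} \<subseteq> l \<and> l \<subseteq> f - {w} \<and> card l = 2}"
    using link_edge_subset_W_edge[OF _ f(1,2)] pendant_notin_link[OF assms(1,2)] y card_link_edge
    by blast
  then have "card {l \<in> link. y \<in> l} \<le> (card (f - {w}) - card {y}) choose (2 - card {y})"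
    using y by (intro card_le_choose_if_supersets[OF finite_Diff[OF finite_edge[OF f(1)]]]) auto
  then show ?thesis using card_edge[OF f(1)] finite_edge[OF f(1)] f(3) by simp
qed

lemma card_link_bound:
  assumes "\<And>y. y \<in> Y \<Longrightarrow> card {l \<in> link. y \<in> l} \<le> 1"
  shows "2 * card link + card (\<Union>link \<inter> Y) \<le> 2 * card (\<Union>link)"
  by (rule double_card_le_if_degree_le_2)
    (use assms finite_Union_link card_link_edge link_degree_le_2 in auto)

lemma card_H1_le:
  "card H1 \<le> card (pendant_vertices e1) + card (pendant_vertices e2) + card link"
proof -
  let ?P1 = "(\<lambda>w. insert w (e1 - {x})) ` pendant_vertices e1"
    and ?P2 = "(\<lambda>w. insert w (e2 - {x})) ` pendant_vertices e2"
  have "H1 \<subseteq> ?P1 \<union> ?P2 \<union> insert x ` link"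
    by (auto elim: H1_cases)
  then have "card H1 \<le> card (?P1 \<union> ?P2 \<union> insert x ` link)"
    using finite_pendant_vertices finite_link by (intro card_mono) auto
  also have "\<dots> \<le> card ?P1 + card ?P2 + card (insert x ` link)"
    by (meson add_mono card_Un_le le_refl order_trans)
  also have "\<dots> \<le> card (pendant_vertices e1) + card (pendant_vertices e2) + card link"
    by (intro add_mono card_image_le finite_pendant_vertices finite_link)
  finally show ?thesis .
qed

lemma card_H1_le_card_W1:
  assumes "pendant_vertices e1 \<inter> pendant_vertices e2 = {}"
  shows "card H1 \<le> card W1"
proof -
  let ?P = "pendant_vertices e1 \<union> pendant_vertices e2"
  have "card (pendant_vertices e1) + card (pendant_vertices e2) = card ?P"
    using card_Un_disjoint[OF finite_pendant_vertices finite_pendant_vertices assms] by simp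
  moreover have "card link \<le> card (\<Union>link)" using card_link_bound[of "{}"] by simp
  moreover have "card ?P + card (\<Union>link) \<le> card W1"
  proof -
    have "?P \<inter> \<Union>link = {}" using pendant_notin_link by blast
    then have "card ?P + card (\<Union>link) = card (?P \<union> \<Union>link)"
      using finite_pendant_vertices finite_Union_link
      by (intro card_Un_disjoint[symmetric]) auto
    also have "\<dots> \<le> card W1"
      using pendant_vertices_subset_W1 Union_link_subset_W1 by (intro card_mono finite_W1) blast
    finally show ?thesis .
  qed
  ultimately show ?thesis using card_H1_le by linarith
qed

lemma card_H1_bound_if_common_pendant:
  assumes w1: "w \<in> pendant_vertices e1" and w2: "w \<in> pendant_vertices e2"
  shows "card H1 + 3 \<le> 2 * card W1"
proof -
  let ?P = "pendant_vertices e1 \<union> pendant_vertices e2" and ?D = "\<Union>link"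
  obtain f where f: "f \<in> H" "f \<subseteq> W" "w \<in> f"
    using w1 pendant_vertices_subset_W1 mem_W1_iff by blast
  define Y where "Y = f - {w}"
  have "finite Y" "card Y = 2" using finite_edge[OF f(1)] card_edge[OF f(1)] f(3) by (simp_all add: Y_def)
  have "Y \<subseteq> W1" using f mem_W1_iff by (auto simp: Y_def)
  have "Y \<inter> ?P = {}"
    using pendant_vertices_in_common_W_edge[OF _ w2 f(1,2) _ f(3)]
      pendant_vertices_in_common_W_edge[OF w1 _ f(1,2) f(3)] by (auto simp: Y_def)
  have "2 * card link + card (?D \<inter> Y) \<le> 2 * card ?D"
    by (rule card_link_bound) (use link_degree_le_1[OF _ w1 f] in \<open>simp add: Y_def\<close>)
  moreover have "card (pendant_vertices e1) + card (pendant_vertices e2) \<le> 2 * card ?P"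
    using card_mono[OF finite_UnI[OF finite_pendant_vertices finite_pendant_vertices]]
    by (metis Un_upper1 Un_upper2 add_mono mult_2)
  moreover have "card ?P + card ?D + card (Y - ?D) \<le> card W1"
  proof -
    have "?P \<inter> ?D = {}" using pendant_notin_link by blast
    then have "card ?P + card ?D = card (?P \<union> ?D)"
      using finite_pendant_vertices finite_Union_link
      by (intro card_Un_disjoint[symmetric]) auto
    moreover have "card (?P \<union> ?D) + card (Y - ?D) = card (?P \<union> ?D \<union> (Y - ?D))"
      using finite_pendant_vertices finite_Union_link \<open>finite Y\<close> \<open>Y \<inter> ?P = {}\<close>
      by (intro card_Un_disjoint[symmetric]) auto
    moreover have "card (?P \<union> ?D \<union> (Y - ?D)) \<le> card W1"
      using pendant_vertices_subset_W1 Union_link_subset_W1 \<open>Y \<subseteq> W1\<close>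
      by (intro card_mono finite_W1) blast
    ultimately show ?thesis by linarith
  qed
  moreover have "card (?D \<inter> Y) + card (Y - ?D) = 2"
    using card_Int_Diff[OF \<open>finite Y\<close>, of ?D] \<open>card Y = 2\<close> by (simp add: Int_commute)
  moreover have "card (?D \<inter> Y) \<le> card ?D" by (intro card_mono finite_Union_link) blast
  ultimately show ?thesis using card_H1_le by linarith
qed

lemma card_H1_bound:
  assumes "3 \<le> card W1"
  shows "card H1 + 3 \<le> 2 * card W1"
proof (cases "pendant_vertices e1 \<inter> pendant_vertices e2 = {}")
  case True
  then show ?thesis using card_H1_le_card_W1 assms by linarith
next
  case False
  then show ?thesis using card_H1_bound_if_common_pendant by blast
qed

lemma card_induced_U_H1_bound:
  assumes "4 \<le> card W1"
  shows "card (induced H U) + card H1 \<le> 2 * card W1 + 2"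
proof (cases "pendant_vertices e1 = {} \<and> pendant_vertices e2 = {}")
  case False
  then obtain e w where e: "e \<in> {e1, e2}" and w: "w \<in> pendant_vertices e" by blast
  obtain e' where e': "e \<in> H" "e' \<in> H" "e \<inter> e' = {x}" "U = e \<union> e'" using other_edge[OF e] .
  have p: "insert w (e - {x}) \<in> H" and "w \<in> W1" using w by (auto simp: pendant_vertices_def)
  then obtain f where f: "f \<in> H" "f \<subseteq> W" "w \<in> f" by (auto simp: mem_W1_iff)
  then have "f \<inter> (e \<union> e') = {}" using W_Int_U e'(4) by blast
  then have "card (induced H U) \<le> 4"
    using card_induced_le_4_if_pendant[OF e' (1-3) p f(1,3)] e'(4) by simp
  then show ?thesis using card_H1_bound assms by linarith
next
  case True
  then have H1_link: "card H1 \<le> card link" using card_H1_le by simp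
  show ?thesis
  proof (cases "link = {}")
    case True
    have "card (induced H U) \<le> 10"
      using card_induced_le_choose_3[of U] card_Un_crossing_edges[OF e1 e2 e1_Int_e2]
        finite_edge[OF e1] finite_edge[OF e2] by (simp add: U_def numeral_eq_Suc)
    then show ?thesis using H1_link True assms by simp
  next
    case False
    then obtain l where l: "l \<in> link" by blast
    have "l \<subseteq> W" using link_subset_W1[OF l] W1_subset_W by blast
    then have "insert x l \<inter> (e1 \<union> e2) = {x}" using W_Int_U x_in_U by (auto simp: U_def)
    then have "card (induced H U) \<le> 6"
      using card_induced_le_6_if_centre_edge[OF e1 e2 e1_Int_e2 centre_edge[OF l]] by (simp add: U_def)
    moreover have "card link \<le> card W1"
      using card_link_bound[of "{}"] card_mono[OF finite_W1 Union_link_subset_W1] by simp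
    ultimately show ?thesis using H1_link assms by linarith
  qed
qed

end

theorem mainTheorem10:
  fixes V :: "'a set" and H :: "'a set set" and e1 e2 :: "'a set" and x :: 'a
  assumes "three_graph V H"
    and "PC_free H"
    and "e1 \<in> H" and "e2 \<in> H" and "e1 \<inter> e2 = {x}"
    and "U = e1 \<union> e2" and "W = V - U"
    and "induced H W \<noteq> {}"
    and "W0 = {v \<in> W. degree (induced H W) v = 0}"
    and "W1 = W - W0"
    and "H1 = {h \<in> H. h \<inter> U \<noteq> {} \<and> h \<inter> W \<noteq> {} \<and> h \<inter> W \<subseteq> W1}"
  shows "card H1 + 3 \<le> 2 * card W1
     \<and> (card W1 \<ge> 4 \<longrightarrow> card (induced H U) + card H1 \<le> 2 * card W1 + 2)"
proof -
  interpret G: P_free_two_edges V H e1 e2 x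
    using assms(1-5) by unfold_locales (auto simp: PC_free_def)
  have U: "U = G.U" using assms(6) by (simp add: G.U_def)
  have W: "W = G.W" using assms(7) by (simp add: G.W_def U)
  have "finite (induced H W)" using G.finite_H by (simp add: induced_def)
  then have W1: "W1 = G.W1"
    using assms(9,10) by (auto simp: G.W1_def W degree_eq_0_iff induced_def)
  have H1: "H1 = G.H1" using assms(11) by (simp add: G.H1_def U W W1)
  have "3 \<le> card W1" using G.card_W1_ge_3 assms(8) by (simp add: W W1)
  then show ?thesis using G.card_H1_bound G.card_induced_U_H1_bound by (simp add: U W1 H1)
qed

end
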